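(* Let $f(x)=|x|$ on $[-1,1]$. For each integer $n\geq 0$ let $p_n^{L_1}$ be the best $L_1$ polynomial approximant of degree $\leq n$ to $f$ and $p_n^{L_\infty}$ the best $L_\infty$ (minimax) polynomial approximant of degree $\leq n$ to $f$, and let \[ \Omega_n=\Big\{x\in[-1,1]:|f(x)-p_n^{L_1}(x)|\geq\tfrac12\|f-p_n^{L_\infty}\|_\infty\Big\}. \] Then $|\Omega_n|=\mathcal{O}(n^{-1})$ as $n\to\infty$, where $|\cdot|$ denotes Lebesgue measure.
   Context: $p_n^{L_1}$ minimizes $\int_{-1}^1|f(x)-q(x)|\,dx$ and $p_n^{L_\infty}$ minimizes $\max_{x\in[-1,1]}|f(x)-q(x)|$ over real polynomials $q$ of degree $\leq n$; $\|g\|_\infty=\max_{x\in[-1,1]}|g(x)|$. *)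

theory Defs
  imports "HOL-Analysis.Analysis" "HOL-Computational_Algebra.Polynomial" "HOL-Library.Landau_Symbols"
begin

definition L1_err :: "(real \<Rightarrow> real) \<Rightarrow> real poly \<Rightarrow> real" where
  "L1_err f q = integral {-1..1} (\<lambda>x. \<bar>f x - poly q x\<bar>)"

definition sup_err :: "(real \<Rightarrow> real) \<Rightarrow> real poly \<Rightarrow> real" where
  "sup_err f q = (SUP x\<in>{-1..1}. \<bar>f x - poly q x\<bar>)"

definition is_best_L1 :: "(real \<Rightarrow> real) \<Rightarrow> nat \<Rightarrow> real poly \<Rightarrow> bool" where
  "is_best_L1 f n p \<longleftrightarrow> degree p \<le> n \<and> (\<forall>q. degree q \<le> n \<longrightarrow> L1_err f p \<le> L1_err f q)"

definition is_best_Linf :: "(real \<Rightarrow> real) \<Rightarrow> nat \<Rightarrow> real poly \<Rightarrow> bool" where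
  "is_best_Linf f n p \<longleftrightarrow> degree p \<le> n \<and> (\<forall>q. degree q \<le> n \<longrightarrow> sup_err f p \<le> sup_err f q)"

end

theory Submission
  imports Defs
begin

(*
  By Markov's inequality, |Omega_n| <= 2 ||f - p_n^L1||_1 / E_n with E_n = ||f - p_n^Linf||_inf,
  so it suffices to show ||f - p_n^L1||_1 = O(1/n^2) and E_n >= c/n.

  Lower bound: substitute x = cos t and integrate the error against the kernel
  cos (2Mt) (sum_{j<=k} (-1)^j cos (2jt))^2 on [0, pi]. Expanded into cosines cos (2pt) with
  M - 2k <= p <= M + 2k, it annihilates polynomials in cos t of degree < 2(M - 2k), while its
  pairing with |cos t| is a signed sum of the moments 2 (-1)^(p+1) / (4p^2 - 1) whose signs all
  agree; this pairing is therefore of size k^2/M^2, whereas the kernel has L1 norm O(k).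

  Upper bound: for odd m the polynomial s = T_m(x)/x is even, about m in size near 0 and at most
  1/x away from 0. With P the odd antiderivative of s^6, the even polynomial x P(x) / P(1) of
  degree 6m - 4 approximates |x| with error x (P(1) - P(x)) / P(1), which is at most x and at
  most O(1 / (m^5 x^4)); integrating gives an L1 error O(1/m^2).
*)

lemma measure_superlevel_le_integral:
  fixes g :: "real \<Rightarrow> real"
  assumes g_cont: "continuous_on {a..b} g" and g_nonneg: "\<And>x. x \<in> {a..b} \<Longrightarrow> 0 \<le> g x"
    and "0 < c"
  shows "measure lborel {x \<in> {a..b}. c \<le> g x} \<le> integral {a..b} g / c"
proof -
  have int: "set_integrable lborel {a..b} g"
    by (rule borel_integrable_atLeastAtMost'[OF g_cont])
  have "emeasure lborel {x \<in> {a..b}. c \<le> g x} \<le> ennreal (1 / c * (LINT x:{a..b}|lborel. g x))"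
    by (rule integral_Markov_inequality'[OF int]) (use g_nonneg \<open>0 < c\<close> in auto)
  moreover have "0 \<le> integral {a..b} g"
    by (intro integral_nonneg integrable_continuous_interval g_cont g_nonneg)
  ultimately show ?thesis
    using set_borel_integral_eq_integral(2)[OF int] \<open>0 < c\<close>
    by (simp add: measure_def enn2real_leI)
qed

lemma fundamental_theorem_of_calculus_real:
  fixes F f :: "real \<Rightarrow> real"
  assumes "a \<le> b" "\<And>x. x \<in> {a..b} \<Longrightarrow> (F has_real_derivative f x) (at x)"
  shows "(f has_integral (F b - F a)) {a..b}"
  by (rule fundamental_theorem_of_calculus)
     (use assms in \<open>auto simp: has_real_derivative_iff_has_vector_derivative[symmetric]
                        intro: has_field_derivative_at_within\<close>)

lemma has_integral_abs_le:
  fixes f g :: "real \<Rightarrow> real"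
  assumes "(f has_integral I) S" "(g has_integral J) S" "\<And>x. x \<in> S \<Longrightarrow> \<bar>f x\<bar> \<le> g x"
  shows "\<bar>I\<bar> \<le> J"
proof -
  have "I \<le> J" by (rule has_integral_le[OF assms(1,2)]) (use assms(3) in fastforce)
  moreover have "- I \<le> J"
    by (rule has_integral_le[OF has_integral_neg[OF assms(1)] assms(2)]) (use assms(3) in fastforce)
  ultimately show ?thesis by linarith
qed

section \<open>Trigonometric integrals\<close>

lemma cos_int_mult_has_integral:
  "((\<lambda>t. cos (of_int z * t)) has_integral (if z = 0 then pi else 0)) {0..pi}"
proof (cases "z = 0")
  case True
  then show ?thesis using has_integral_const_real[of "1::real" 0 pi] by simp
next
  case False
  have "((\<lambda>t. cos (of_int z * t)) has_integral
      (sin (of_int z * pi) / of_int z - sin (of_int z * 0) / of_int z)) {0..pi}"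
    by (rule fundamental_theorem_of_calculus_real) (use False in \<open>auto intro!: derivative_eq_intros\<close>)
  moreover have "sin (of_int z * pi) = 0" by (simp add: sin_times_pi_eq_0)
  ultimately show ?thesis using False by simp
qed

lemma cos_mult_cos_has_integral:
  "((\<lambda>t. cos (real i * t) * cos (real j * t)) has_integral
     (if i = j then (if i = 0 then pi else pi / 2) else 0)) {0..pi}"
proof -
  have "(\<lambda>t. cos (real i * t) * cos (real j * t)) =
      (\<lambda>t. (cos (of_int (int i - int j) * t) + cos (of_int (int i + int j) * t)) / 2)"
    by (rule ext) (simp add: cos_times_cos algebra_simps)
  moreover have "(if i = j then (if i = 0 then pi else pi / 2) else 0) =
      ((if int i - int j = 0 then pi else 0) + (if int i + int j = 0 then pi else 0)) / 2"
    by auto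
  ultimately show ?thesis
    by (simp only:) (intro has_integral_divide has_integral_add cos_int_mult_has_integral)
qed

lemma cos_times_cos_mult:
  assumes "1 \<le> m"
  shows "cos t * cos (real m * t) = (cos (real (m - 1) * t) + cos (real (m + 1) * t)) / 2"
proof -
  have "t - real m * t = - (real (m - 1) * t)" "t + real m * t = real (m + 1) * t"
    using assms by (simp_all add: of_nat_diff algebra_simps)
  then show ?thesis by (simp add: cos_times_cos)
qed

lemma cos_power_orthogonal:
  "l < m \<Longrightarrow> ((\<lambda>t. cos t ^ l * cos (real m * t)) has_integral 0) {0..pi}"
proof (induction l arbitrary: m)
  case 0
  then show ?case using cos_int_mult_has_integral[of "int m"] by simp
next
  case (Suc l)
  have eq: "cos t ^ Suc l * cos (real m * t) =
      (cos t ^ l * cos (real (m - 1) * t) + cos t ^ l * cos (real (m + 1) * t)) / 2" for t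
  proof -
    have "cos t ^ Suc l * cos (real m * t) = cos t ^ l * (cos t * cos (real m * t))" by simp
    also have "\<dots> = cos t ^ l * ((cos (real (m - 1) * t) + cos (real (m + 1) * t)) / 2)"
      using Suc.prems by (simp only: cos_times_cos_mult)
    finally show ?thesis by (simp add: algebra_simps)
  qed
  have "((\<lambda>t. (cos t ^ l * cos (real (m - 1) * t) + cos t ^ l * cos (real (m + 1) * t)) / 2)
      has_integral (0 + 0) / 2) {0..pi}"
    by (intro has_integral_divide has_integral_add Suc.IH) (use Suc.prems in auto)
  then show ?case by (simp only: eq) simp
qed

lemma poly_cos_orthogonal:
  assumes "degree q < m"
  shows "((\<lambda>t. poly q (cos t) * cos (real m * t)) has_integral 0) {0..pi}"
proof -
  have "((\<lambda>t. \<Sum>i\<le>degree q. coeff q i * (cos t ^ i * cos (real m * t))) has_integral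
      (\<Sum>i\<le>degree q. coeff q i * 0)) {0..pi}"
    by (intro has_integral_sum has_integral_mult_right cos_power_orthogonal) (use assms in auto)
  then show ?thesis by (simp add: poly_altdef sum_distrib_left sum_distrib_right ac_simps)
qed

lemma sin_odd_multiple_half_pi:
  "sin ((2 * real m + 1) * pi / 2) = (-1) ^ m" "sin ((2 * real m - 1) * pi / 2) = - ((-1) ^ m)"
proof -
  have "(2 * real m + 1) * pi / 2 = real m * pi + pi / 2" "(2 * real m - 1) * pi / 2 = real m * pi - pi / 2"
    by (simp_all add: field_simps)
  then show "sin ((2 * real m + 1) * pi / 2) = (-1) ^ m" "sin ((2 * real m - 1) * pi / 2) = - ((-1) ^ m)"
    by (simp_all only:) (simp_all add: sin_add sin_diff)
qed

lemma abs_cos_mult_has_integral: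
  assumes F: "\<And>t. (F has_real_derivative cos t * g t) (at t)"
  shows "((\<lambda>t. \<bar>cos t\<bar> * g t) has_integral (F (pi / 2) - F 0) + - (F pi - F (pi / 2))) {0..pi}"
proof -
  have left: "((\<lambda>t. \<bar>cos t\<bar> * g t) has_integral (F (pi / 2) - F 0)) {0..pi / 2}"
  proof (rule has_integral_cong[THEN iffD1, OF _ fundamental_theorem_of_calculus_real[OF _ F]])
    fix t :: real assume "t \<in> {0..pi / 2}"
    then have "0 \<le> cos t" by (intro cos_ge_zero) auto
    then show "cos t * g t = \<bar>cos t\<bar> * g t" by simp
  qed simp
  have right: "((\<lambda>t. \<bar>cos t\<bar> * g t) has_integral - (F pi - F (pi / 2))) {pi / 2..pi}"
  proof (rule has_integral_cong[THEN iffD1, OF _ has_integral_neg[OF fundamental_theorem_of_calculus_real[OF _ F]]])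
    fix t :: real assume "t \<in> {pi / 2..pi}"
    then have "0 \<le> cos (pi - t)" by (intro cos_ge_zero) auto
    then show "- (cos t * g t) = \<bar>cos t\<bar> * g t" by simp
  qed simp
  show ?thesis by (rule has_integral_combine[OF _ _ left right]) auto
qed

definition abs_cos_moment :: "nat \<Rightarrow> real" where
  "abs_cos_moment m = 2 * (-1) ^ (m + 1) / (4 * real m ^ 2 - 1)"

lemma abs_cos_moment_has_integral:
  "((\<lambda>t. \<bar>cos t\<bar> * cos (real (2 * m) * t)) has_integral abs_cos_moment m) {0..pi}"
proof -
  define a where "a = 2 * real m + 1"
  define b where "b = 2 * real m - 1"
  have "a \<noteq> 0" unfolding a_def by linarith
  have "b \<noteq> 0"
  proof
    assume "b = 0"
    then have "2 * m = 1" unfolding b_def by linarith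
    then show False by presburger
  qed
  define F where "F t = (sin (a * t) / a + sin (b * t) / b) / 2" for t
  have cos_prod: "cos t * cos (real (2 * m) * t) = (cos (a * t) + cos (b * t)) / 2" for t
  proof -
    have "t - real (2 * m) * t = - (b * t)" "t + real (2 * m) * t = a * t"
      unfolding a_def b_def by (simp_all add: algebra_simps)
    then show ?thesis by (simp add: cos_times_cos)
  qed
  have "(F has_real_derivative (cos t * cos (real (2 * m) * t))) (at t)" for t
    unfolding F_def cos_prod using \<open>a \<noteq> 0\<close> \<open>b \<noteq> 0\<close> by (auto intro!: derivative_eq_intros simp: field_simps)
  note integral = abs_cos_mult_has_integral[OF this]
  have "F 0 = 0" unfolding F_def by simp
  moreover have "F pi = 0"
  proof -
    have "a \<in> \<int>" "b \<in> \<int>" unfolding a_def b_def by (intro Ints_add Ints_diff Ints_mult Ints_of_nat; simp)+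
    then have "sin (a * pi) = 0" "sin (b * pi) = 0" by (simp_all add: sin_times_pi_eq_0)
    then show ?thesis unfolding F_def by simp
  qed
  moreover have "F (pi / 2) = ((-1) ^ m / a - (-1) ^ m / b) / 2"
    unfolding F_def a_def b_def using sin_odd_multiple_half_pi[of m] by (simp add: mult.commute)
  ultimately have "(F (pi / 2) - F 0) + - (F pi - F (pi / 2)) = (-1) ^ m * ((b - a) / (a * b))"
    using \<open>a \<noteq> 0\<close> \<open>b \<noteq> 0\<close> by (simp add: field_simps)
  also have "\<dots> = abs_cos_moment m"
  proof -
    have "a * b = 4 * real m ^ 2 - 1" "b - a = -2"
      unfolding a_def b_def by (simp_all add: algebra_simps power2_eq_square)
    then show ?thesis unfolding abs_cos_moment_def by simp
  qed
  finally show ?thesis using integral by simp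
qed

lemma abs_cos_moment_sign:
  assumes "even (p + q)"
  shows "(-1) ^ (q + 1) * abs_cos_moment p = 2 / (4 * real p ^ 2 - 1)"
proof -
  have "(-1 :: real) ^ (q + 1) * (-1) ^ (p + 1) = (-1) ^ (p + q + 2)"
    unfolding power_add by simp
  also have "\<dots> = 1" using assms by (simp add: neg_one_even_power)
  finally show ?thesis unfolding abs_cos_moment_def by (simp add: field_simps)
qed

lemma two_div_four_sq_minus_one_ge:
  assumes "1 \<le> p" "p \<le> N"
  shows "1 / (2 * real N ^ 2) \<le> 2 / (4 * real p ^ 2 - 1)"
proof -
  have "1 \<le> real p ^ 2" using assms by simp
  moreover have "real p ^ 2 \<le> real N ^ 2" using assms by (intro power_mono) auto
  ultimately have "0 < 4 * real p ^ 2 - 1" "4 * real p ^ 2 - 1 \<le> 4 * real N ^ 2" by linarith+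
  then have "2 / (4 * real N ^ 2) \<le> 2 / (4 * real p ^ 2 - 1)"
    by (intro divide_left_mono mult_pos_pos) (use assms in auto)
  then show ?thesis by simp
qed

section \<open>A lower bound for the minimax error of the absolute value\<close>

definition alt_cos_sum :: "nat \<Rightarrow> real \<Rightarrow> real" where
  "alt_cos_sum k t = (\<Sum>j\<le>k. (-1) ^ j * cos (real (2 * j) * t))"

lemma alt_cos_sum_square_has_integral:
  "((\<lambda>t. alt_cos_sum k t ^ 2) has_integral ((real k + 2) * pi / 2)) {0..pi}"
proof -
  have square: "alt_cos_sum k t ^ 2 =
      (\<Sum>i\<le>k. \<Sum>j\<le>k. (-1) ^ (i + j) * (cos (real (2 * i) * t) * cos (real (2 * j) * t)))" for t
    unfolding alt_cos_sum_def power2_eq_square sum_product by (simp add: power_add ac_simps)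
  have inner: "(\<Sum>j\<le>k. (-1) ^ (i + j) * (if 2 * i = 2 * j then (if 2 * i = 0 then pi else pi / 2) else 0))
      = pi / 2 + (if i = 0 then pi / 2 else 0)" if "i \<le> k" for i
  proof -
    have "(\<Sum>j\<le>k. (-1) ^ (i + j) * (if 2 * i = 2 * j then (if 2 * i = 0 then pi else pi / 2) else 0))
        = (\<Sum>j\<le>k. if j = i then (if i = 0 then pi else pi / 2) else 0)"
      by (intro sum.cong refl) (auto simp flip: mult_2 simp: power_mult_distrib[symmetric])
    then show ?thesis using that by simp
  qed
  have "(\<Sum>i\<le>k. \<Sum>j\<le>k. (-1) ^ (i + j) *
      (if 2 * i = 2 * j then (if 2 * i = 0 then pi else pi / 2) else 0)) =
      (\<Sum>i\<le>k. pi / 2 + (if i = 0 then pi / 2 else 0))"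
    by (intro sum.cong refl inner) auto
  also have "\<dots> = (real k + 1) * (pi / 2) + pi / 2"
    by (simp add: sum.distrib)
  also have "\<dots> = (real k + 2) * pi / 2"
    by (simp add: field_simps)
  finally have total: "(\<Sum>i\<le>k. \<Sum>j\<le>k. (-1) ^ (i + j) *
      (if 2 * i = 2 * j then (if 2 * i = 0 then pi else pi / 2) else 0)) = (real k + 2) * pi / 2" .
  have "((\<lambda>t. \<Sum>i\<le>k. \<Sum>j\<le>k. (-1) ^ (i + j) * (cos (real (2 * i) * t) * cos (real (2 * j) * t)))
      has_integral (\<Sum>i\<le>k. \<Sum>j\<le>k. (-1) ^ (i + j) *
        (if 2 * i = 2 * j then (if 2 * i = 0 then pi else pi / 2) else 0))) {0..pi}"
    by (intro has_integral_sum has_integral_mult_right cos_mult_cos_has_integral finite_atMost)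
  then show ?thesis by (simp only: square total)
qed

definition cos_kernel :: "nat \<Rightarrow> nat \<Rightarrow> real \<Rightarrow> real" where
  "cos_kernel M k t = cos (real (2 * M) * t) * alt_cos_sum k t ^ 2"

lemma cos_times_cos_times_cos:
  fixes a b c :: real
  shows "cos a * cos b * cos c = (cos (a + b + c) + cos (a + b - c) + cos (a - b + c) + cos (a - b - c)) / 4"
proof -
  have "cos a * cos b * cos c = (cos (a - b) * cos c + cos (a + b) * cos c) / 2"
    by (simp add: cos_times_cos field_simps)
  also have "\<dots> = ((cos (a - b - c) + cos (a - b + c)) / 2 + (cos (a + b - c) + cos (a + b + c)) / 2) / 2"
    by (simp only: cos_times_cos)
  finally show ?thesis by (simp add: field_simps)
qed

lemma cos_kernel_expand:
  assumes "2 * k < M"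
  shows "cos_kernel M k t = (\<Sum>i\<le>k. \<Sum>j\<le>k. (-1) ^ (i + j) / 4 *
    (cos (real (2 * (M + i + j)) * t) + cos (real (2 * (M + i - j)) * t)
     + cos (real (2 * (M - i + j)) * t) + cos (real (2 * (M - i - j)) * t)))"
proof -
  have "cos (real (2 * M) * t) * ((-1) ^ i * cos (real (2 * i) * t) * ((-1) ^ j * cos (real (2 * j) * t))) =
    (-1) ^ (i + j) / 4 * (cos (real (2 * (M + i + j)) * t) + cos (real (2 * (M + i - j)) * t)
     + cos (real (2 * (M - i + j)) * t) + cos (real (2 * (M - i - j)) * t))"
    if "i + j \<le> M" for i j
  proof -
    have "cos (real (2 * M) * t) * ((-1) ^ i * cos (real (2 * i) * t) * ((-1) ^ j * cos (real (2 * j) * t))) =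
        (-1) ^ (i + j) * (cos (real (2 * M) * t) * cos (real (2 * i) * t) * cos (real (2 * j) * t))"
      by (simp add: power_add)
    also have "\<dots> = (-1) ^ (i + j) / 4 * (cos (real (2 * (M + i + j)) * t) + cos (real (2 * (M + i - j)) * t)
       + cos (real (2 * (M - i + j)) * t) + cos (real (2 * (M - i - j)) * t))"
      unfolding cos_times_cos_times_cos using that by (simp add: of_nat_diff algebra_simps)
    finally show ?thesis .
  qed
  note summand = this
  have "cos_kernel M k t = (\<Sum>i\<le>k. \<Sum>j\<le>k.
      cos (real (2 * M) * t) * ((-1) ^ i * cos (real (2 * i) * t) * ((-1) ^ j * cos (real (2 * j) * t))))"
    unfolding cos_kernel_def alt_cos_sum_def power2_eq_square sum_product by (simp add: sum_distrib_left)
  also have "\<dots> = (\<Sum>i\<le>k. \<Sum>j\<le>k. (-1) ^ (i + j) / 4 *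
    (cos (real (2 * (M + i + j)) * t) + cos (real (2 * (M + i - j)) * t)
     + cos (real (2 * (M - i + j)) * t) + cos (real (2 * (M - i - j)) * t)))"
    by (intro sum.cong refl summand) (use assms in auto)
  finally show ?thesis .
qed

lemma cos_kernel_weighted_has_integral:
  assumes "2 * k < M"
    and w: "\<And>p. M - 2 * k \<le> p \<Longrightarrow> ((\<lambda>t. w t * cos (real (2 * p) * t)) has_integral c p) {0..pi}"
  shows "((\<lambda>t. w t * cos_kernel M k t) has_integral
    (\<Sum>i\<le>k. \<Sum>j\<le>k. (-1) ^ (i + j) / 4 * (c (M + i + j) + c (M + i - j) + c (M - i + j) + c (M - i - j))))
    {0..pi}"
proof -
  have "((\<lambda>t. \<Sum>i\<le>k. \<Sum>j\<le>k. (-1) ^ (i + j) / 4 *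
      (w t * cos (real (2 * (M + i + j)) * t) + w t * cos (real (2 * (M + i - j)) * t)
       + w t * cos (real (2 * (M - i + j)) * t) + w t * cos (real (2 * (M - i - j)) * t)))
    has_integral
    (\<Sum>i\<le>k. \<Sum>j\<le>k. (-1) ^ (i + j) / 4 * (c (M + i + j) + c (M + i - j) + c (M - i + j) + c (M - i - j))))
    {0..pi}"
    by (intro has_integral_sum has_integral_mult_right has_integral_add w finite_atMost) auto
  then show ?thesis
    by (simp add: cos_kernel_expand[OF assms(1)] sum_distrib_left algebra_simps)
qed

lemma abs_cos_kernel_moment_ge:
  assumes "2 * k < M"
  shows "(real k + 1) ^ 2 / (8 * real (M + 2 * k) ^ 2) \<le> (-1) ^ (M + 1) *
    (\<Sum>i\<le>k. \<Sum>j\<le>k. (-1) ^ (i + j) / 4 * (abs_cos_moment (M + i + j) + abs_cos_moment (M + i - j)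
       + abs_cos_moment (M - i + j) + abs_cos_moment (M - i - j)))"
proof -
  have "(real k + 1) ^ 2 / (8 * real (M + 2 * k) ^ 2) = (\<Sum>i\<le>k. \<Sum>j\<le>k. 1 / (8 * real (M + 2 * k) ^ 2))"
    by (simp add: power2_eq_square algebra_simps)
  also have "\<dots> \<le> (\<Sum>i\<le>k. \<Sum>j\<le>k. (-1) ^ (M + 1) * ((-1) ^ (i + j) / 4 *
      (abs_cos_moment (M + i + j) + abs_cos_moment (M + i - j)
       + abs_cos_moment (M - i + j) + abs_cos_moment (M - i - j))))"
  proof (intro sum_mono)
    fix i j assume "i \<in> {..k}" "j \<in> {..k}"
    then have ij: "i \<le> k" "j \<le> k" by auto
    define B :: "nat \<Rightarrow> real" where "B p = 2 / (4 * real p ^ 2 - 1)" for p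
    define \<sigma> :: real where "\<sigma> = (-1) ^ (M + i + j + 1)"
    have B: "\<sigma> * abs_cos_moment p = B p" if "p \<in> {M + i + j, M + i - j, M - i + j, M - i - j}" for p
      unfolding B_def \<sigma>_def by (rule abs_cos_moment_sign) (use that ij assms in auto)
    have "1 / (2 * real (M + 2 * k) ^ 2) \<le> B (M + i + j)"
      unfolding B_def by (rule two_div_four_sq_minus_one_ge) (use ij assms in auto)
    moreover have "0 \<le> B p" if "1 \<le> p" for p
      using two_div_four_sq_minus_one_ge[OF that order.refl] unfolding B_def
      by (smt (verit) divide_nonneg_nonneg zero_le_power2)
    then have "0 \<le> B (M + i - j)" "0 \<le> B (M - i + j)" "0 \<le> B (M - i - j)" using ij assms by auto
    moreover have "(-1) ^ (M + 1) * ((-1) ^ (i + j) / 4 * (abs_cos_moment (M + i + j) + abs_cos_moment (M + i - j)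
       + abs_cos_moment (M - i + j) + abs_cos_moment (M - i - j)))
      = (\<sigma> * abs_cos_moment (M + i + j) + \<sigma> * abs_cos_moment (M + i - j)
       + \<sigma> * abs_cos_moment (M - i + j) + \<sigma> * abs_cos_moment (M - i - j)) / 4"
    proof -
      have sign: "(-1) ^ (M + 1) * (-1) ^ (i + j) = \<sigma>" unfolding \<sigma>_def by (simp add: power_add)
      show ?thesis by (simp only: flip: sign) (simp add: field_simps)
    qed
    moreover have "\<sigma> * abs_cos_moment (M + i + j) = B (M + i + j)" "\<sigma> * abs_cos_moment (M + i - j) = B (M + i - j)"
      "\<sigma> * abs_cos_moment (M - i + j) = B (M - i + j)" "\<sigma> * abs_cos_moment (M - i - j) = B (M - i - j)"
      by (rule B; simp)+
    ultimately show "1 / (8 * real (M + 2 * k) ^ 2) \<le> (-1) ^ (M + 1) * ((-1) ^ (i + j) / 4 *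
      (abs_cos_moment (M + i + j) + abs_cos_moment (M + i - j)
       + abs_cos_moment (M - i + j) + abs_cos_moment (M - i - j)))"
      by simp
  qed
  finally show ?thesis by (simp add: sum_distrib_left)
qed

lemma abs_err_le_sup_err:
  assumes "continuous_on {-1..1} f" "x \<in> {-1..1}"
  shows "\<bar>f x - poly q x\<bar> \<le> sup_err f q"
  unfolding sup_err_def
proof (rule cSUP_upper[OF assms(2)])
  have "compact ((\<lambda>x. \<bar>f x - poly q x\<bar>) ` {-1..1})"
    by (intro compact_continuous_image continuous_intros assms(1)) auto
  then show "bdd_above ((\<lambda>x. \<bar>f x - poly q x\<bar>) ` {-1..1})"
    by (intro bounded_imp_bdd_above compact_imp_bounded)
qed

lemma abs_cos_kernel_moment_le_sup_err:
  assumes "2 * k < M" "degree q < 2 * (M - 2 * k)"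
  shows "\<bar>\<Sum>i\<le>k. \<Sum>j\<le>k. (-1) ^ (i + j) / 4 * (abs_cos_moment (M + i + j)
    + abs_cos_moment (M + i - j) + abs_cos_moment (M - i + j) + abs_cos_moment (M - i - j))\<bar>
    \<le> sup_err abs q * ((real k + 2) * pi / 2)"
    (is "\<bar>?D\<bar> \<le> ?S * _")
proof -
  have err: "\<bar>\<bar>cos t\<bar> - poly q (cos t)\<bar> \<le> ?S" for t
    using abs_err_le_sup_err[of abs "cos t" q] continuous_on_rabs[OF continuous_on_id] by (simp add: o_def)
  have "((\<lambda>t. \<bar>cos t\<bar> * cos_kernel M k t - poly q (cos t) * cos_kernel M k t) has_integral ?D - 0) {0..pi}"
  proof (rule has_integral_diff)
    show "((\<lambda>t. \<bar>cos t\<bar> * cos_kernel M k t) has_integral ?D) {0..pi}"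
      by (intro cos_kernel_weighted_has_integral abs_cos_moment_has_integral assms(1))
    have "((\<lambda>t. poly q (cos t) * cos_kernel M k t) has_integral
        (\<Sum>i\<le>k. \<Sum>j\<le>k. (-1) ^ (i + j) / 4 * (0 + 0 + 0 + 0))) {0..pi}"
      by (intro cos_kernel_weighted_has_integral poly_cos_orthogonal assms(1)) (use assms(2) in auto)
    then show "((\<lambda>t. poly q (cos t) * cos_kernel M k t) has_integral 0) {0..pi}" by simp
  qed
  then have kernel_integral:
    "((\<lambda>t. \<bar>cos t\<bar> * cos_kernel M k t - poly q (cos t) * cos_kernel M k t) has_integral ?D) {0..pi}"
    by simp
  have majorant_integral:
    "((\<lambda>t. ?S * alt_cos_sum k t ^ 2) has_integral ?S * ((real k + 2) * pi / 2)) {0..pi}"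
    by (intro has_integral_mult_right alt_cos_sum_square_has_integral)
  have majorant:
    "\<bar>\<bar>cos t\<bar> * cos_kernel M k t - poly q (cos t) * cos_kernel M k t\<bar> \<le> ?S * alt_cos_sum k t ^ 2" for t
  proof -
    have "\<bar>cos_kernel M k t\<bar> \<le> alt_cos_sum k t ^ 2"
      unfolding cos_kernel_def abs_mult by (simp add: mult_left_le_one_le)
    moreover have "0 \<le> ?S" using err[of 0] by linarith
    ultimately show ?thesis
      unfolding left_diff_distrib[symmetric] abs_mult by (intro mult_mono err) auto
  qed
  show ?thesis using has_integral_abs_le[OF kernel_integral majorant_integral majorant] .
qed

lemma sup_err_abs_ge:
  assumes "degree q \<le> n"
  shows "1 / (100 * pi * (real n + 2)) \<le> sup_err abs q"
proof -
  define M where "M = 3 * n + 1"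
  define D where "D = (\<Sum>i\<le>n. \<Sum>j\<le>n. (-1) ^ (i + j) / 4 * (abs_cos_moment (M + i + j)
    + abs_cos_moment (M + i - j) + abs_cos_moment (M - i + j) + abs_cos_moment (M - i - j)))"
  have "2 * n < M" unfolding M_def by simp
  have "\<bar>D\<bar> \<le> sup_err abs q * ((real n + 2) * pi / 2)"
    unfolding D_def using assms by (intro abs_cos_kernel_moment_le_sup_err) (auto simp: M_def)
  moreover have "(real n + 1) ^ 2 / (8 * real (M + 2 * n) ^ 2) \<le> \<bar>D\<bar>"
  proof -
    have "\<bar>(-1) ^ (M + 1) * D\<bar> = \<bar>D\<bar>" by (simp add: abs_mult)
    then show ?thesis
      using abs_cos_kernel_moment_ge[OF \<open>2 * n < M\<close>] abs_ge_self[of "(-1) ^ (M + 1) * D"]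
      unfolding D_def by linarith
  qed
  moreover have "1 / 200 \<le> (real n + 1) ^ 2 / (8 * real (M + 2 * n) ^ 2)"
  proof -
    have "real (M + 2 * n) ^ 2 \<le> 25 * (real n + 1) ^ 2"
      unfolding M_def by (simp add: power2_eq_square algebra_simps)
    then have "(real n + 1) ^ 2 / (8 * (25 * (real n + 1) ^ 2)) \<le> (real n + 1) ^ 2 / (8 * real (M + 2 * n) ^ 2)"
      unfolding M_def by (intro divide_left_mono) auto
    then show ?thesis by simp
  qed
  ultimately have "1 / 200 \<le> sup_err abs q * ((real n + 2) * pi / 2)" by linarith
  moreover have "1 / (100 * pi * (real n + 2)) = (1 / 200) / ((real n + 2) * pi / 2)"
    by (simp add: field_simps)
  ultimately show ?thesis by (simp add: pos_divide_le_eq ac_simps)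
qed

section \<open>Chebyshev polynomials\<close>

fun chebyshev :: "nat \<Rightarrow> real poly" where
  "chebyshev 0 = 1"
| "chebyshev (Suc 0) = [:0, 1:]"
| "chebyshev (Suc (Suc k)) = [:0, 2:] * chebyshev (Suc k) - chebyshev k"

lemma poly_chebyshev_cos: "poly (chebyshev k) (cos t) = cos (real k * t)"
proof (induction k rule: chebyshev.induct)
  case (3 k)
  have "t - real (Suc k) * t = - (real k * t)" "t + real (Suc k) * t = real (Suc (Suc k)) * t"
    by (simp_all add: algebra_simps)
  then have "cos (real (Suc (Suc k)) * t) = 2 * cos t * cos (real (Suc k) * t) - cos (real k * t)"
    using cos_times_cos[of t "real (Suc k) * t"] by simp
  then show ?case using 3 by simp
qed simp_all

lemma degree_chebyshev: "degree (chebyshev k) \<le> k"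
proof (induction k rule: chebyshev.induct)
  case (3 k)
  have "degree ([:0, 2:] * chebyshev (Suc k)) \<le> Suc (Suc k)"
    using degree_mult_le[of "[:0, 2:]" "chebyshev (Suc k)"] 3(1) by simp
  then show ?case unfolding chebyshev.simps by (rule degree_diff_le) (use 3(2) in simp)
qed auto

lemma poly_chebyshev_minus: "poly (chebyshev k) (- x) = (-1) ^ k * poly (chebyshev k) x"
  by (induction k rule: chebyshev.induct) (auto simp: algebra_simps)

lemma abs_poly_chebyshev_odd:
  assumes "odd m" "-1 \<le> t" "t \<le> 1"
  shows "\<bar>poly (chebyshev m) t\<bar> = \<bar>sin (real m * arcsin t)\<bar>"
proof -
  obtain r where m: "m = 2 * r + 1" using \<open>odd m\<close> oddE by blast
  have "poly (chebyshev m) t = cos (real m * arccos t)"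
    using poly_chebyshev_cos[of m "arccos t"] assms by simp
  also have "arccos t = pi / 2 - arcsin t" using arcsin_arccos_eq[OF assms(2,3)] by simp
  also have "real m * (pi / 2 - arcsin t) = real r * pi + (pi / 2 - real m * arcsin t)"
    unfolding m by (simp add: algebra_simps)
  also have "cos (real r * pi + (pi / 2 - real m * arcsin t)) = (-1) ^ r * sin (real m * arcsin t)"
    by (simp add: cos_add cos_diff)
  finally show ?thesis by (simp add: abs_mult)
qed

lemma half_le_sin:
  fixes x :: real
  assumes "0 \<le> x" "x \<le> 1"
  shows "x / 2 \<le> sin x"
proof -
  have "(\<lambda>x. sin x - x / 2) 0 \<le> (\<lambda>x. sin x - x / 2) x"
  proof (rule DERIV_nonneg_imp_nondecreasing[OF assms(1)])
    fix y assume "0 \<le> y" "y \<le> x"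
    then have "cos (pi / 3) \<le> cos y"
      by (intro cos_monotone_0_pi_le) (use assms pi_gt3 in auto)
    then have "1 / 2 \<le> cos y" by (simp add: cos_60)
    moreover have "((\<lambda>x. sin x - x / 2) has_real_derivative cos y - 1 / 2) (at y)"
      by (auto intro!: derivative_eq_intros)
    ultimately show "\<exists>d. ((\<lambda>x. sin x - x / 2) has_real_derivative d) (at y) \<and> 0 \<le> d" by auto
  qed
  then show ?thesis by simp
qed

(* For odd m this is T_m(x) / x, which equals +-sin (m arcsin x) / x on [-1, 1]. *)

definition chebyshev_div_x :: "nat \<Rightarrow> real poly" where
  "chebyshev_div_x m = chebyshev m div [:0, 1:]"

lemma chebyshev_eq_x_mult:
  assumes "odd m"
  shows "chebyshev m = [:0, 1:] * chebyshev_div_x m"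
proof -
  have "poly (chebyshev m) 0 = 0" using poly_chebyshev_minus[of m 0] assms by simp
  then have "[:0, 1:] dvd chebyshev m" using poly_eq_0_iff_dvd[of "chebyshev m" 0] by simp
  then show ?thesis unfolding chebyshev_div_x_def by (simp only: dvd_mult_div_cancel)
qed

lemma poly_chebyshev_odd: "odd m \<Longrightarrow> poly (chebyshev m) x = x * poly (chebyshev_div_x m) x"
  by (subst chebyshev_eq_x_mult) auto

lemma degree_chebyshev_div_x: "odd m \<Longrightarrow> degree (chebyshev_div_x m) \<le> m - 1"
proof (cases "chebyshev_div_x m = 0")
  case False
  assume "odd m"
  then have "degree (chebyshev m) = 1 + degree (chebyshev_div_x m)"
    using False by (subst chebyshev_eq_x_mult) (auto simp: degree_mult_eq)
  then show ?thesis using degree_chebyshev[of m] by simp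
qed simp

lemma poly_chebyshev_div_x_minus:
  assumes "odd m"
  shows "poly (chebyshev_div_x m) (- x) = poly (chebyshev_div_x m) x"
proof (cases "x = 0")
  case False
  have "- x * poly (chebyshev_div_x m) (- x) = - (x * poly (chebyshev_div_x m) x)"
    using poly_chebyshev_minus[of m x] poly_chebyshev_odd[OF assms, of x] poly_chebyshev_odd[OF assms, of "- x"]
      assms by simp
  then show ?thesis using False by simp
qed simp

lemma abs_poly_chebyshev_div_x_le:
  assumes "odd m" "0 < t" "t \<le> 1"
  shows "\<bar>poly (chebyshev_div_x m) t\<bar> \<le> 1 / t"
proof -
  have "t * \<bar>poly (chebyshev_div_x m) t\<bar> = \<bar>sin (real m * arcsin t)\<bar>"
    using abs_poly_chebyshev_odd[of m t] poly_chebyshev_odd[of m t] assms by (simp add: abs_mult)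
  also have "\<dots> \<le> 1" by simp
  finally show ?thesis using assms by (simp add: field_simps)
qed

lemma abs_poly_chebyshev_div_x_ge:
  assumes "odd m" "0 < t" "t \<le> 1 / (4 * real m)"
  shows "real m / 2 \<le> \<bar>poly (chebyshev_div_x m) t\<bar>"
proof -
  have m: "1 \<le> real m" using \<open>odd m\<close> by (cases m) auto
  then have "t \<le> 1 / 4" using assms(3) by (smt (verit) frac_le)
  define a where "a = arcsin t"
  have "0 \<le> a" unfolding a_def using arcsin_le_arcsin[of 0 t] \<open>0 < t\<close> \<open>t \<le> 1 / 4\<close> by simp
  have "sin a = t" unfolding a_def using \<open>0 < t\<close> \<open>t \<le> 1 / 4\<close> by (intro sin_arcsin) auto
  have "1 / 2 \<le> sin (1 :: real)" using half_le_sin[of 1] by simp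
  then have "a \<le> arcsin (sin 1)"
    unfolding a_def using \<open>0 < t\<close> \<open>t \<le> 1 / 4\<close> by (intro arcsin_le_arcsin) auto
  also have "arcsin (sin 1) = 1" using pi_gt3 by (intro arcsin_sin) auto
  finally have "a \<le> 1" .
  have "t \<le> a" using sin_x_le_x[OF \<open>0 \<le> a\<close>] \<open>sin a = t\<close> by simp
  have "a \<le> 2 * t" using half_le_sin[OF \<open>0 \<le> a\<close> \<open>a \<le> 1\<close>] \<open>sin a = t\<close> by simp
  then have "real m * a \<le> real m * (2 * (1 / (4 * real m)))"
    using assms(3) m by (intro mult_left_mono) auto
  then have "real m * a \<le> 1" using m by simp
  have "real m * t / 2 \<le> real m * a / 2" using \<open>t \<le> a\<close> by (simp add: mult_left_mono)
  also have "\<dots> \<le> sin (real m * a)" using half_le_sin[of "real m * a"] \<open>0 \<le> a\<close> \<open>real m * a \<le> 1\<close> by simp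
  also have "\<dots> \<le> t * \<bar>poly (chebyshev_div_x m) t\<bar>"
    using abs_poly_chebyshev_odd[of m t] poly_chebyshev_odd[of m t] assms \<open>t \<le> 1 / 4\<close>
    unfolding a_def by (simp add: abs_mult)
  finally show ?thesis using \<open>0 < t\<close> by (simp add: field_simps)
qed

section \<open>An L1 approximation of the absolute value\<close>

lemma L1_err_abs_even:
  assumes "\<And>x. poly q (- x) = poly q x"
  shows "L1_err abs q = 2 * integral {0..1} (\<lambda>x. \<bar>x - poly q x\<bar>)"
proof -
  define e where "e x = \<bar>\<bar>x\<bar> - poly q x\<bar>" for x :: real
  have "e integrable_on {-1..1}"
    unfolding e_def by (intro integrable_continuous_interval continuous_intros)
  then have "L1_err abs q = integral {-1..0} e + integral {0..1} e"
    unfolding L1_err_def e_def[symmetric] by (simp add: Henstock_Kurzweil_Integration.integral_combine)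
  also have "integral {-1..0} e = integral {-1..-0} (\<lambda>x. e (- x))"
    unfolding e_def using assms by simp
  also have "\<dots> = integral {0..1} e" using Henstock_Kurzweil_Integration.integral_reflect_real[where f = e and a = 0 and b = 1] by simp
  also have "integral {0..1} e = integral {0..1} (\<lambda>x. \<bar>x - poly q x\<bar>)"
    unfolding e_def by (intro integral_cong) simp
  finally show ?thesis by simp
qed

lemma integral_unit_interval_le:
  fixes e :: "real \<Rightarrow> real"
  assumes cont: "continuous_on {0..1} e" and "0 < b" "b \<le> 1" "0 \<le> C"
    and near: "\<And>x. 0 \<le> x \<Longrightarrow> x \<le> 1 \<Longrightarrow> e x \<le> x"
    and far: "\<And>x. 0 < x \<Longrightarrow> x \<le> 1 \<Longrightarrow> e x \<le> C / x ^ 4"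
  shows "integral {0..1} e \<le> b ^ 2 / 2 + C / (3 * b ^ 3)"
proof -
  have int: "e integrable_on {u..v}" if "0 \<le> u" "v \<le> 1" for u v
    by (intro integrable_continuous_interval continuous_on_subset[OF cont]) (use that in auto)
  have id_integral: "((\<lambda>x. x) has_integral (b ^ 2 / 2 - 0 ^ 2 / 2)) {0..b}"
    by (rule fundamental_theorem_of_calculus_real) (use \<open>0 < b\<close> in \<open>auto intro!: derivative_eq_intros\<close>)
  have "integral {0..b} e \<le> integral {0..b} (\<lambda>x. x)"
    by (rule integral_le[OF int has_integral_integrable[OF id_integral]]) (use near \<open>b \<le> 1\<close> in auto)
  then have "integral {0..b} e \<le> b ^ 2 / 2"
    using integral_unique[OF id_integral] by simp
  moreover have far_integral: "((\<lambda>x. C / x ^ 4) has_integral (- C / (3 * 1 ^ 3) - - C / (3 * b ^ 3))) {b..1}"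
    by (rule fundamental_theorem_of_calculus_real[OF \<open>b \<le> 1\<close>])
       (use \<open>0 < b\<close> in \<open>auto intro!: derivative_eq_intros simp: field_simps power_eq_if\<close>)
  have "integral {b..1} e \<le> integral {b..1} (\<lambda>x. C / x ^ 4)"
    by (rule integral_le[OF int has_integral_integrable[OF far_integral]]) (use far \<open>0 < b\<close> in auto)
  then have "integral {b..1} e \<le> C / (3 * b ^ 3)"
    using integral_unique[OF far_integral] \<open>0 \<le> C\<close> by simp
  ultimately show ?thesis
    using Henstock_Kurzweil_Integration.integral_combine[OF _ \<open>b \<le> 1\<close> int[of 0 1]] \<open>0 < b\<close> by simp
qed

definition poly_antideriv :: "real poly \<Rightarrow> real poly" where
  "poly_antideriv p = (\<Sum>i\<le>degree p. monom (coeff p i / real (Suc i)) (Suc i))"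

lemma poly_poly_antideriv:
  "poly (poly_antideriv p) x = (\<Sum>i\<le>degree p. coeff p i / real (Suc i) * x ^ Suc i)"
  by (simp add: poly_antideriv_def poly_sum poly_monom)

lemma poly_antideriv_has_real_derivative:
  "(poly (poly_antideriv p) has_real_derivative poly p x) (at x)"
proof -
  have "((\<lambda>x. \<Sum>i\<le>degree p. coeff p i / real (Suc i) * x ^ Suc i) has_real_derivative
        (\<Sum>i\<le>degree p. coeff p i / real (Suc i) * (real (Suc i) * x ^ i))) (at x)"
    by (intro DERIV_sum DERIV_cmult) (use DERIV_pow[of "Suc _" x] in auto)
  moreover have "(\<Sum>i\<le>degree p. coeff p i / real (Suc i) * (real (Suc i) * x ^ i)) = poly p x"
    by (simp add: poly_altdef)
  ultimately show ?thesis unfolding poly_poly_antideriv[abs_def] by simp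
qed

lemma degree_poly_antideriv: "degree (poly_antideriv p) \<le> degree p + 1"
  unfolding poly_antideriv_def
  by (intro degree_sum_le) (auto intro: order.trans[OF degree_monom_le])

lemma poly_antideriv_0: "poly (poly_antideriv p) 0 = 0"
  by (simp add: poly_poly_antideriv)

lemma poly_antideriv_mono:
  assumes "\<And>x. 0 \<le> poly p x" "x \<le> y"
  shows "poly (poly_antideriv p) x \<le> poly (poly_antideriv p) y"
  by (rule DERIV_nonneg_imp_nondecreasing[OF assms(2)])
     (use poly_antideriv_has_real_derivative assms(1) in blast)

lemma poly_antideriv_odd:
  assumes "\<And>x. poly p (- x) = poly p x"
  shows "poly (poly_antideriv p) (- x) = - poly (poly_antideriv p) x"
proof -
  let ?P = "poly (poly_antideriv p)"
  have "((\<lambda>y. ?P y + ?P (- y)) has_real_derivative 0) (at y)" for y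
  proof -
    have "((\<lambda>y. ?P y + ?P (- y)) has_real_derivative poly p y + poly p (- y) * (-1)) (at y)"
      by (intro DERIV_add poly_antideriv_has_real_derivative DERIV_chain2[OF poly_antideriv_has_real_derivative])
         (auto intro!: derivative_eq_intros)
    then show ?thesis using assms by simp
  qed
  then have "?P x + ?P (- x) = ?P 0 + ?P (- 0)"
    by (intro DERIV_isconst_all) blast
  then show ?thesis using poly_antideriv_0[of p] by simp
qed

lemma poly_antideriv_increment_ge:
  assumes "u \<le> v" "\<And>y. u \<le> y \<Longrightarrow> y \<le> v \<Longrightarrow> a \<le> poly k y"
  shows "a * (v - u) \<le> poly (poly_antideriv k) v - poly (poly_antideriv k) u"
proof -
  have "(\<lambda>y. poly (poly_antideriv k) y - a * y) u \<le> (\<lambda>y. poly (poly_antideriv k) y - a * y) v"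
  proof (rule DERIV_nonneg_imp_nondecreasing[OF assms(1)])
    fix y assume "u \<le> y" "y \<le> v"
    then show "\<exists>d. ((\<lambda>y. poly (poly_antideriv k) y - a * y) has_real_derivative d) (at y) \<and> 0 \<le> d"
      using assms(2) by (intro exI[of _ "poly k y - a"] conjI DERIV_diff poly_antideriv_has_real_derivative)
                        (auto intro!: derivative_eq_intros)
  qed
  then show ?thesis by (simp add: algebra_simps)
qed

lemma poly_antideriv_tail_le:
  assumes "0 < x" "x \<le> 1" "\<And>y. x \<le> y \<Longrightarrow> y \<le> 1 \<Longrightarrow> poly k y \<le> 1 / y ^ 6"
  shows "poly (poly_antideriv k) 1 - poly (poly_antideriv k) x \<le> 1 / (5 * x ^ 5)"
proof -
  have "(\<lambda>y. poly (poly_antideriv k) y + 1 / (5 * y ^ 5)) 1 \<le> (\<lambda>y. poly (poly_antideriv k) y + 1 / (5 * y ^ 5)) x"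
  proof (rule DERIV_nonpos_imp_nonincreasing[OF assms(2)])
    fix y assume "x \<le> y" "y \<le> 1"
    then have "0 < y" using assms(1) by simp
    have "((\<lambda>y. poly (poly_antideriv k) y + 1 / (5 * y ^ 5)) has_real_derivative poly k y + - 1 / y ^ 6) (at y)"
      by (intro DERIV_add poly_antideriv_has_real_derivative)
         (use \<open>0 < y\<close> in \<open>auto intro!: derivative_eq_intros simp: field_simps power_eq_if\<close>)
    with assms(3)[OF \<open>x \<le> y\<close> \<open>y \<le> 1\<close>]
    show "\<exists>d. ((\<lambda>y. poly (poly_antideriv k) y + 1 / (5 * y ^ 5)) has_real_derivative d) (at y) \<and> d \<le> 0"
      by auto
  qed
  then show ?thesis by simp
qed

definition kernel_abs_approx :: "real poly \<Rightarrow> real poly" where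
  "kernel_abs_approx k = smult (1 / poly (poly_antideriv k) 1) ([:0, 1:] * poly_antideriv k)"

lemma degree_kernel_abs_approx: "degree (kernel_abs_approx k) \<le> degree k + 2"
proof -
  have "degree (kernel_abs_approx k) \<le> degree ([:0, 1:] * poly_antideriv k)"
    unfolding kernel_abs_approx_def by simp
  also have "\<dots> \<le> 1 + degree (poly_antideriv k)"
    using degree_mult_le[of "[:0, 1:]" "poly_antideriv k"] by simp
  finally show ?thesis using degree_poly_antideriv[of k] by simp
qed

lemma L1_err_kernel_abs_approx_le:
  fixes k :: "real poly"
  defines "I \<equiv> poly (poly_antideriv k) 1"
  assumes nonneg: "\<And>x. 0 \<le> poly k x" and even: "\<And>x. poly k (- x) = poly k x"
    and tail: "\<And>y. 0 < y \<Longrightarrow> y \<le> 1 \<Longrightarrow> poly k y \<le> 1 / y ^ 6"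
    and "0 < I" "0 < b" "b \<le> 1"
  shows "L1_err abs (kernel_abs_approx k) \<le> b ^ 2 + 2 / (15 * I * b ^ 3)"
proof -
  let ?P = "poly (poly_antideriv k)" and ?q = "kernel_abs_approx k"
  have q: "poly ?q x = x * ?P x / I" for x
    unfolding kernel_abs_approx_def I_def by simp
  have "poly ?q (- x) = poly ?q x" for x
    unfolding q poly_antideriv_odd[OF even] by simp
  then have L1: "L1_err abs ?q = 2 * integral {0..1} (\<lambda>x. \<bar>x - poly ?q x\<bar>)"
    by (rule L1_err_abs_even)
  have error: "\<bar>x - poly ?q x\<bar> = x * (I - ?P x) / I" if "0 \<le> x" "x \<le> 1" for x
  proof -
    have "?P x \<le> I" unfolding I_def using poly_antideriv_mono[OF nonneg \<open>x \<le> 1\<close>] .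
    moreover have "x - poly ?q x = x * (I - ?P x) / I"
      unfolding q using \<open>0 < I\<close> by (simp add: field_simps)
    ultimately show ?thesis using \<open>0 \<le> x\<close> \<open>0 < I\<close> by simp
  qed
  have "integral {0..1} (\<lambda>x. \<bar>x - poly ?q x\<bar>) \<le> b ^ 2 / 2 + 1 / (5 * I) / (3 * b ^ 3)"
  proof (rule integral_unit_interval_le)
    show "continuous_on {0..1} (\<lambda>x. \<bar>x - poly ?q x\<bar>)" by (intro continuous_intros)
    show "\<bar>x - poly ?q x\<bar> \<le> x" if "0 \<le> x" "x \<le> 1" for x
    proof -
      have "0 \<le> ?P x" using poly_antideriv_mono[OF nonneg \<open>0 \<le> x\<close>] poly_antideriv_0[of k] by simp
      then have "x * (I - ?P x) \<le> x * I" using \<open>0 \<le> x\<close> by (intro mult_left_mono) auto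
      then show ?thesis unfolding error[OF that] using \<open>0 < I\<close> by (simp add: divide_le_eq)
    qed
    show "\<bar>x - poly ?q x\<bar> \<le> 1 / (5 * I) / x ^ 4" if "0 < x" "x \<le> 1" for x
    proof -
      have "x * (I - ?P x) \<le> x * (1 / (5 * x ^ 5))"
        unfolding I_def using poly_antideriv_tail_le[OF that] tail \<open>0 < x\<close>
        by (intro mult_left_mono) auto
      also have "\<dots> = 1 / (5 * x ^ 4)" using \<open>0 < x\<close> by (simp add: field_simps power_eq_if)
      finally show ?thesis unfolding error[OF less_imp_le[OF \<open>0 < x\<close>] \<open>x \<le> 1\<close>]
        using \<open>0 < I\<close> by (simp add: divide_right_mono field_simps)
    qed
  qed (use \<open>0 < b\<close> \<open>b \<le> 1\<close> \<open>0 < I\<close> in auto)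
  then show ?thesis unfolding L1 using \<open>0 < I\<close> by (simp add: field_simps)
qed

lemma poly_antideriv_chebyshev_div_x_power_ge:
  assumes "odd m"
  shows "real m ^ 5 / 512 \<le> poly (poly_antideriv (chebyshev_div_x m ^ 6)) 1"
proof -
  define k where "k = chebyshev_div_x m ^ 6"
  define c where "c = 1 / (4 * real m)"
  have m: "1 \<le> m" using \<open>odd m\<close> by (cases m) auto
  then have "0 < c" by (simp add: c_def)
  have nonneg: "0 \<le> poly k x" for x
    unfolding k_def by (simp add: zero_le_even_power)
  have "(real m / 2) ^ 6 * (c - c / 2) \<le> poly (poly_antideriv k) c - poly (poly_antideriv k) (c / 2)"
  proof (rule poly_antideriv_increment_ge)
    fix y assume "c / 2 \<le> y" "y \<le> c"
    with \<open>0 < c\<close> have "real m / 2 \<le> \<bar>poly (chebyshev_div_x m) y\<bar>"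
      by (intro abs_poly_chebyshev_div_x_ge \<open>odd m\<close>) (auto simp flip: c_def)
    then have "(real m / 2) ^ 6 \<le> \<bar>poly (chebyshev_div_x m) y\<bar> ^ 6" by (intro power_mono) auto
    then show "(real m / 2) ^ 6 \<le> poly k y" unfolding k_def by (simp add: power_even_abs)
  qed (use \<open>0 < c\<close> in simp)
  moreover have "poly (poly_antideriv k) 0 \<le> poly (poly_antideriv k) (c / 2)"
    "poly (poly_antideriv k) c \<le> poly (poly_antideriv k) 1"
    using m by (intro poly_antideriv_mono nonneg; simp add: c_def)+
  moreover have "(real m / 2) ^ 6 * (c - c / 2) = real m ^ 5 / 512"
    unfolding c_def using m by (simp add: field_simps power_eq_if)
  ultimately show ?thesis unfolding k_def using poly_antideriv_0[of "chebyshev_div_x m ^ 6"] by linarith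
qed

lemma L1_err_abs_odd_degree_le:
  assumes "odd m"
  shows "\<exists>q. degree q \<le> 6 * m - 4 \<and> L1_err abs q \<le> 72 / real m ^ 2"
proof -
  define k where "k = chebyshev_div_x m ^ 6"
  define I where "I = poly (poly_antideriv k) 1"
  have m: "1 \<le> m" using \<open>odd m\<close> by (cases m) auto
  have k_abs: "poly k x = \<bar>poly (chebyshev_div_x m) x\<bar> ^ 6" for x
    unfolding k_def by (simp add: power_even_abs)
  have "real m ^ 5 / 512 \<le> I"
    unfolding I_def k_def by (rule poly_antideriv_chebyshev_div_x_power_ge[OF \<open>odd m\<close>])
  moreover have "0 < real m ^ 5 / 512" using m by simp
  ultimately have "0 < I" by linarith
  have "L1_err abs (kernel_abs_approx k) \<le> (1 / real m) ^ 2 + 2 / (15 * I * (1 / real m) ^ 3)"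
    unfolding I_def
  proof (rule L1_err_kernel_abs_approx_le)
    show "poly k (- x) = poly k x" for x
      unfolding k_def using poly_chebyshev_div_x_minus[OF \<open>odd m\<close>] by simp
    show "poly k y \<le> 1 / y ^ 6" if "0 < y" "y \<le> 1" for y
    proof -
      have "\<bar>poly (chebyshev_div_x m) y\<bar> ^ 6 \<le> (1 / y) ^ 6"
        by (intro power_mono abs_poly_chebyshev_div_x_le \<open>odd m\<close> that) simp
      then show ?thesis unfolding k_abs by (simp add: power_one_over)
    qed
  qed (use \<open>0 < I\<close> m in \<open>auto simp: I_def k_def zero_le_even_power\<close>)
  also have "\<dots> \<le> 1 / real m ^ 2 + 1024 / 15 / real m ^ 2"
  proof -
    have "2 / (15 * I * (1 / real m) ^ 3) \<le> 2 / (15 * (real m ^ 5 / 512) * (1 / real m) ^ 3)"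
      using \<open>real m ^ 5 / 512 \<le> I\<close> \<open>0 < I\<close> m by (intro divide_left_mono mult_right_mono mult_pos_pos) auto
    also have "\<dots> = 1024 / 15 / real m ^ 2"
      using m by (simp add: field_simps power_eq_if)
    finally show ?thesis by (simp add: power_one_over)
  qed
  also have "\<dots> \<le> 72 / real m ^ 2"
    using m by (simp add: field_simps)
  finally have "L1_err abs (kernel_abs_approx k) \<le> 72 / real m ^ 2" .
  moreover have "degree (kernel_abs_approx k) \<le> 6 * m - 4"
  proof -
    have "degree k \<le> 6 * (m - 1)"
      unfolding k_def using degree_power_le[of "chebyshev_div_x m" 6] degree_chebyshev_div_x[OF \<open>odd m\<close>]
      by (metis mult.commute le_trans mult_le_mono1)
    then show ?thesis using degree_kernel_abs_approx[of k] m by simp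
  qed
  ultimately show ?thesis by blast
qed

lemma L1_err_best_abs_le:
  assumes "is_best_L1 abs n p" "20 \<le> n"
  shows "L1_err abs p \<le> 7200 / real n ^ 2"
proof -
  define r where "r = (n - 2) div 12"
  define m where "m = 2 * r + 1"
  have "12 * r \<le> n - 2" "n - 2 < 12 * r + 12"
    using div_mult_mod_eq[of "n - 2" 12] mod_less_divisor[of 12 "n - 2"] unfolding r_def by linarith+
  moreover have "0 < r" unfolding r_def using \<open>20 \<le> n\<close> by (simp add: div_greater_zero_iff)
  ultimately have "6 * m - 4 \<le> n" "n \<le> 10 * m"
    using m_def by linarith+
  then have "real n \<le> 10 * real m" by simp
  obtain q where q: "degree q \<le> 6 * m - 4" "L1_err abs q \<le> 72 / real m ^ 2"
    using L1_err_abs_odd_degree_le[of m] unfolding m_def by auto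
  have "L1_err abs p \<le> L1_err abs q"
    using assms(1) q(1) \<open>6 * m - 4 \<le> n\<close> unfolding is_best_L1_def by simp
  also have "\<dots> \<le> 72 / real m ^ 2" by (rule q(2))
  also have "\<dots> \<le> 72 / (real n / 10) ^ 2"
  proof -
    have "(real n / 10) ^ 2 \<le> real m ^ 2"
      using \<open>real n \<le> 10 * real m\<close> by (intro power_mono) auto
    then show ?thesis using \<open>20 \<le> n\<close> by (intro divide_left_mono) auto
  qed
  finally show ?thesis by (simp add: power_divide)
qed

theorem mainTheorem7:
  fixes P1 Pinf :: "nat \<Rightarrow> real poly"
  assumes "\<And>n. is_best_L1 abs n (P1 n)"
      and "\<And>n. is_best_Linf abs n (Pinf n)"
  shows "(\<lambda>n. measure lborel {x \<in> {-1..1::real}. \<bar>\<bar>x\<bar> - poly (P1 n) x\<bar> \<ge> sup_err abs (Pinf n) / 2})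
           \<in> O(\<lambda>n. 1 / real n)"
proof (intro bigoI eventually_at_top_linorderI)
  fix n :: nat assume "20 \<le> n"
  define S where "S = sup_err abs (Pinf n)"
  have S: "1 / (100 * pi * (real n + 2)) \<le> S"
    unfolding S_def using assms(2)[of n] by (intro sup_err_abs_ge) (simp add: is_best_Linf_def)
  moreover have "0 < 1 / (100 * pi * (real n + 2))" by simp
  ultimately have "0 < S" by linarith
  have "measure lborel {x \<in> {-1..1::real}. S / 2 \<le> \<bar>\<bar>x\<bar> - poly (P1 n) x\<bar>} \<le> L1_err abs (P1 n) / (S / 2)"
    unfolding L1_err_def using \<open>0 < S\<close>
    by (intro measure_superlevel_le_integral continuous_intros) auto
  also have "\<dots> \<le> (7200 / real n ^ 2) / (1 / (100 * pi * (real n + 2)) / 2)"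
    using L1_err_best_abs_le[OF assms(1) \<open>20 \<le> n\<close>] S \<open>0 < S\<close> by (intro frac_le) auto
  also have "\<dots> = 1440000 * pi * (real n + 2) / real n ^ 2"
    by (simp add: field_simps)
  also have "\<dots> \<le> 1440000 * pi * (2 * real n) / real n ^ 2"
    using \<open>20 \<le> n\<close> by (intro divide_right_mono mult_left_mono) auto
  also have "\<dots> = 2880000 * pi * norm (1 / real n)"
    by (simp add: power2_eq_square)
  finally show "norm (measure lborel {x \<in> {-1..1::real}. sup_err abs (Pinf n) / 2 \<le> \<bar>\<bar>x\<bar> - poly (P1 n) x\<bar>})
      \<le> 2880000 * pi * norm (1 / real n)"
    unfolding S_def real_norm_def by (simp only: abs_of_nonneg[OF measure_nonneg])
qed

end
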